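(* Let $x_s<x_t$ be integers, let $C\ge 0$, and let $f:[x_s,x_t]\to\mathbb{R}$ be such that $([x_s,x_t],f)$ is an Ameso($C$) pair. Suppose there exist $x^0\in[x_s,x_t]$ and positive integers $b_1,b_2$ with $[x^0-b_2,x^0+b_1]\subseteq[x_s,x_t]$ such that $f(x^0)=\min_{y\in[x^0-b_2,x^0+b_1]}f(y)$, $f(x^0)+C\le\max_{y\in[x^0,x^0+b_1]}f(y)$, and $f(x^0)+C\le\max_{y\in[x^0-b_2,x^0]}f(y)$. Then $f(x^0)=\min_{y\in[x_s,x_t]}f(y)$.
   Context: For integers $a\le b$, $[a,b]$ denotes the set of integers $\{a,a+1,\dots,b\}$. Floors and ceilings of vectors are taken componentwise. A set $D^n\subseteq\mathbb{Z}^n$ is an Ameso set if $\lceil(\vec x+\vec y)/2\rceil,\lfloor(\vec x+\vec y)/2\rfloor\in D^n$ for all $\vec x,\vec y\in D^n$. For $C\ge 0$, $(D^n,f)$ is an Ameso($C$) pair if $D^n$ is an Ameso set, $f:D^n\to\mathbb{R}$ is bounded below, and $f(\vec x)+f(\vec y)+C\ge f(\lceil(\vec x+\vec y)/2\rceil)+f(\lfloor(\vec x+\vec y)/2\rfloor)$ for all $\vec x,\vec y\in D^n$. *)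

theory Defs
  imports "HOL-Analysis.Analysis"
begin

text \<open>One-dimensional instance (n = 1) of the Ameso notions: points are integers,
  midpoints are ceiling/floor of (x+y)/2.\<close>

definition ameso_set :: "int set \<Rightarrow> bool" where
  "ameso_set D \<longleftrightarrow> (\<forall>x\<in>D. \<forall>y\<in>D.
      \<lceil>real_of_int (x + y) / 2\<rceil> \<in> D \<and> \<lfloor>real_of_int (x + y) / 2\<rfloor> \<in> D)"

definition ameso_pair :: "real \<Rightarrow> int set \<Rightarrow> (int \<Rightarrow> real) \<Rightarrow> bool" where
  "ameso_pair C D f \<longleftrightarrow> ameso_set D \<and> (\<exists>m. \<forall>x\<in>D. m \<le> f x) \<and>
     (\<forall>x\<in>D. \<forall>y\<in>D. f x + f y + C \<ge>
        f \<lceil>real_of_int (x + y) / 2\<rceil> + f \<lfloor>real_of_int (x + y) / 2\<rfloor>)"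

end

theory Submission
  imports Defs
begin

text \<open>Suppose some \<open>w\<close> to the right of the window had \<open>f w < f x0\<close>, and let \<open>u\<close> be a point
  of the right half of the window with \<open>f x0 + C \<le> f u\<close>. Let \<open>y\<close> be the rightmost maximiser
  of \<open>f\<close> strictly between \<open>x0\<close> and \<open>w\<close>. Reflecting \<open>x0\<close> through \<open>y\<close> gives a point that, by
  the midpoint inequality, is either a maximiser further right or \<open>w\<close> itself with a large value;
  if the reflection overshoots \<open>w\<close>, reflecting \<open>w\<close> through \<open>y\<close> instead bounds the maximum by
  \<open>f w + C < f x0 + C\<close>. Either way we get a contradiction; the left side is symmetric.\<close>

text \<open>The Ameso(C) inequality at the pairs whose midpoint is an integer; these are the only
  instances the argument uses.\<close>

definition approx_midconvex_on :: "real \<Rightarrow> int set \<Rightarrow> (int \<Rightarrow> real) \<Rightarrow> bool" where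
  "approx_midconvex_on C D f \<longleftrightarrow>
     (\<forall>p\<in>D. \<forall>q\<in>D. even (p + q) \<longrightarrow> 2 * f ((p + q) div 2) \<le> f p + f q + C)"

lemma ameso_pair_imp_approx_midconvex_on:
  assumes "ameso_pair C D f"
  shows "approx_midconvex_on C D f"
  unfolding approx_midconvex_on_def
proof (intro ballI impI)
  fix p q assume "p \<in> D" "q \<in> D" "even (p + q)"
  then obtain k where k: "p + q = 2 * k" by blast
  have "real_of_int (p + q) / 2 = real_of_int k" using k by simp
  moreover have "f \<lceil>real_of_int (p + q) / 2\<rceil> + f \<lfloor>real_of_int (p + q) / 2\<rfloor> \<le> f p + f q + C"
    using assms \<open>p \<in> D\<close> \<open>q \<in> D\<close> unfolding ameso_pair_def by blast
  ultimately show "2 * f ((p + q) div 2) \<le> f p + f q + C" using k by simp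
qed

lemma approx_midconvex_on_subset:
  "approx_midconvex_on C D f \<Longrightarrow> E \<subseteq> D \<Longrightarrow> approx_midconvex_on C E f"
  unfolding approx_midconvex_on_def by blast

lemma approx_midconvex_on_reflect:
  assumes "approx_midconvex_on C D f"
  shows "approx_midconvex_on C (uminus ` D) (\<lambda>x. f (- x))"
  unfolding approx_midconvex_on_def
proof (intro ballI impI)
  fix p q assume "p \<in> uminus ` D" "q \<in> uminus ` D" "even (p + q)"
  moreover from \<open>even (p + q)\<close> have "(- p + - q) div 2 = - ((p + q) div 2)" by fastforce
  ultimately show "2 * f (- ((p + q) div 2)) \<le> f (- p) + f (- q) + C"
    using assms unfolding approx_midconvex_on_def
    by (metis add.inverse_inverse image_iff even_minus minus_add_distrib)
qed

lemma approx_midconvex_on_right_endpoint_ge: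
  assumes f: "approx_midconvex_on C {a..z} f" and "C \<ge> 0"
    and u: "a < u" "u < z" "f a + C \<le> f u"
  shows "f a \<le> f z"
proof (rule ccontr)
  assume "\<not> f a \<le> f z"
  then have fz: "f z < f a" by simp
  have mid: "2 * f y \<le> f p + f q + C" if "p \<in> {a..z}" "q \<in> {a..z}" "p + q = 2 * y" for p q y
    using f that unfolding approx_midconvex_on_def by fastforce
  define S where "S = {a<..<z}"
  define M where "M = Max (f ` S)"
  have "finite S" "u \<in> S" using u by (auto simp: S_def)
  then have le_M: "f x \<le> M" if "x \<in> S" for x
    using that by (simp add: M_def)
  have "M \<ge> f a + C" using le_M[OF \<open>u \<in> S\<close>] u by linarith
  define Y where "Y = {x\<in>S. f x = M}"
  have "M \<in> f ` S" unfolding M_def using \<open>finite S\<close> \<open>u \<in> S\<close> by (intro Max_in) auto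
  then have "finite Y" "Y \<noteq> {}" using \<open>finite S\<close> by (auto simp: Y_def)
  define y where "y = Max Y"
  have "y \<in> Y" using \<open>finite Y\<close> \<open>Y \<noteq> {}\<close> by (simp add: y_def)
  then have y: "a < y" "y < z" "f y = M" by (auto simp: Y_def S_def)
  have rightmost: "x \<le> y" if "x \<in> Y" for x
    using \<open>finite Y\<close> that by (simp add: y_def)
  show False
  proof (cases "2 * y - a \<le> z")
    case True
    define b where "b = 2 * y - a"
    have fb: "2 * M \<le> f a + f b + C" using mid[of a b y] True y by (auto simp: b_def)
    show False
    proof (cases "b = z")
      case True
      with fb[unfolded True] fz \<open>M \<ge> f a + C\<close> \<open>C \<ge> 0\<close> show False by linarith
    next
      case False
      then have "b \<in> S" using \<open>2 * y - a \<le> z\<close> y by (auto simp: S_def b_def)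
      with fb \<open>M \<ge> f a + C\<close> le_M have "b \<in> Y" by (fastforce simp: Y_def)
      with rightmost y show False by (fastforce simp: b_def)
    qed
  next
    case False
    define c where "c = 2 * y - z"
    have "c \<in> S" using False y by (auto simp: S_def c_def)
    moreover have "2 * M \<le> f c + f z + C" using mid[of c z y] False y by (auto simp: c_def)
    ultimately show False using le_M fz \<open>M \<ge> f a + C\<close> by fastforce
  qed
qed

lemma approx_midconvex_on_left_endpoint_ge:
  assumes f: "approx_midconvex_on C {a..z} f" and "C \<ge> 0"
    and "a < u" "u < z" "f z + C \<le> f u"
  shows "f z \<le> f a"
  using approx_midconvex_on_right_endpoint_ge[of C "- z" "- a" "\<lambda>x. f (- x)" "- u"]
    approx_midconvex_on_reflect[OF f] assms by simp

lemma Max_bound_attained_off_minimizer: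
  fixes f :: "'a \<Rightarrow> real"
  assumes "finite A" "x \<in> A" "y \<in> A" "y \<noteq> x" and min: "\<And>v. v \<in> A \<Longrightarrow> f x \<le> f v"
    and "C \<ge> 0" "f x + C \<le> Max (f ` A)"
  shows "\<exists>v\<in>A. v \<noteq> x \<and> f x + C \<le> f v"
proof -
  have "Max (f ` A) \<in> f ` A" using assms(1,2) by (intro Max_in) auto
  then obtain v where v: "v \<in> A" "f x + C \<le> f v" using assms(7) by auto
  show ?thesis
  proof (cases "v = x")
    case True
    with v \<open>C \<ge> 0\<close> have "C = 0" by simp
    with assms(3,4) min show ?thesis by auto
  qed (use v in auto)
qed

theorem theorem3:
  fixes xs xt x0 b1 b2 :: int and C :: real and f :: "int \<Rightarrow> real"
  assumes "xs < xt" and "C \<ge> 0"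
    and "ameso_pair C {xs..xt} f"
    and "x0 \<in> {xs..xt}" and "b1 > 0" and "b2 > 0"
    and "{x0 - b2..x0 + b1} \<subseteq> {xs..xt}"
    and "f x0 = Min (f ` {x0 - b2..x0 + b1})"
    and "f x0 + C \<le> Max (f ` {x0..x0 + b1})"
    and "f x0 + C \<le> Max (f ` {x0 - b2..x0})"
  shows "f x0 = Min (f ` {xs..xt})"
proof -
  have window_min: "f x0 \<le> f v" if "v \<in> {x0 - b2..x0 + b1}" for v
    using assms(8) that by simp
  have f: "approx_midconvex_on C {xs..xt} f"
    using assms(3) by (rule ameso_pair_imp_approx_midconvex_on)
  have "\<exists>r\<in>{x0..x0 + b1}. r \<noteq> x0 \<and> f x0 + C \<le> f r"
    using assms(2,5,6,9) window_min
    by (intro Max_bound_attained_off_minimizer[where y = "x0 + 1"]) auto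
  then obtain r where r: "r \<in> {x0..x0 + b1}" "r \<noteq> x0" "f x0 + C \<le> f r" by blast
  have "\<exists>l\<in>{x0 - b2..x0}. l \<noteq> x0 \<and> f x0 + C \<le> f l"
    using assms(2,5,6,10) window_min
    by (intro Max_bound_attained_off_minimizer[where y = "x0 - 1"]) auto
  then obtain l where l: "l \<in> {x0 - b2..x0}" "l \<noteq> x0" "f x0 + C \<le> f l" by blast
  have "f x0 \<le> f w" if w: "w \<in> {xs..xt}" for w
  proof -
    consider "w \<in> {x0 - b2..x0 + b1}" | "x0 + b1 < w" | "w < x0 - b2" by fastforce
    then show ?thesis
    proof cases
      case 2
      have "approx_midconvex_on C {x0..w} f"
        using f w assms(4) by (auto intro: approx_midconvex_on_subset)
      with 2 r assms(2) show ?thesis by (intro approx_midconvex_on_right_endpoint_ge) auto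
    next
      case 3
      have "approx_midconvex_on C {w..x0} f"
        using f w assms(4) by (auto intro: approx_midconvex_on_subset)
      with 3 l assms(2) show ?thesis by (intro approx_midconvex_on_left_endpoint_ge) auto
    qed (rule window_min)
  qed
  with assms(4) show ?thesis by (intro Min_eqI[symmetric]) auto
qed

end
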